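(* There is $c<\infty$ such that if $t_0>0$ and $0<\epsilon\le t_0^{3/2}$, then the $\mu$-measure of the set of loops $\gamma$ with $\gamma[0,t_\gamma]\subset\mathbb{D}$, $t_\gamma\ge t_0$, and $\gamma[0,t_\gamma]\not\subset\mathbb{D}_\epsilon$ is at most $c\,\epsilon\,t_0^{-3/2}$.
   Context: $\mathbb{D}=\{z\in\mathbb{C}:|z|<1\}$ and $\mathbb{D}_\epsilon=\{z\in\mathbb{D}:\mathrm{dist}(z,\partial\mathbb{D})>\epsilon\}$. A (rooted) loop is a continuous $\gamma:[0,t_\gamma]\to\mathbb{C}$, $0<t_\gamma<\infty$, $\gamma(0)=\gamma(t_\gamma)$. The Brownian loop measure $\mu$ on loops is the image of $\mu^{\rm br}\times(\text{area on }\mathbb{C})\times\frac{dt}{2\pi t^2}$ (on $(0,\infty)$) under $(\gamma,z,t)\mapsto z+t^{1/2}\gamma(\cdot/t)$ on $[0,t]$, where $\mu^{\rm br}$ is the law of the two-dimensional Brownian bridge $W_s-sW_1$, $0\le s\le1$, $W$ standard planar Brownian motion. Equivalently $\mu=\int_{\mathbb{C}}\int_0^\infty\frac{1}{2\pi t^2}\mu^{\rm br}_t(z)\,dt\,dz$, where $\mu^{\rm br}_t(z)$ is the law of a Brownian bridge of duration $t$ rooted at $z$. *)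

theory Defs
  imports "HOL-Probability.Probability"
begin

definition unit_disk :: "complex set" where
  "unit_disk = ball 0 1"

definition inner_disk :: "real \<Rightarrow> complex set" where
  "inner_disk eps = {z \<in> unit_disk. infdist z (frontier unit_disk) > eps}"

definition gauss2_density :: "real \<Rightarrow> complex \<Rightarrow> real" where
  "gauss2_density h z = exp (- ((cmod z)^2) / (2 * h)) / (2 * pi * h)"

definition planar_BM :: "'a measure \<Rightarrow> (real \<Rightarrow> 'a \<Rightarrow> complex) \<Rightarrow> bool" where
  "planar_BM M W \<longleftrightarrow>
     prob_space M \<and>
     (\<forall>t. W t \<in> borel_measurable M) \<and>
     (\<forall>\<omega>\<in>space M. W 0 \<omega> = 0 \<and> continuous_on {0..} (\<lambda>t. W t \<omega>)) \<and>
     (\<forall>s t. 0 \<le> s \<and> s < t \<longrightarrow>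
        distributed M lborel (\<lambda>\<omega>. W t \<omega> - W s \<omega>) (\<lambda>z. ennreal (gauss2_density (t - s) z))) \<and>
     (\<forall>(ts :: nat \<Rightarrow> real) n. 0 \<le> ts 0 \<and> (\<forall>i<n. ts i < ts (Suc i)) \<longrightarrow>
        prob_space.indep_vars M (\<lambda>_. borel) (\<lambda>i \<omega>. W (ts (Suc i)) \<omega> - W (ts i) \<omega>) {..<n})"

text \<open>A rooted loop is represented by its time duration t and a path gamma, only
  the values on [0,t] being relevant.\<close>
definition scaled_bridge_loop ::
    "(real \<Rightarrow> 'a \<Rightarrow> complex) \<Rightarrow> complex \<Rightarrow> real \<Rightarrow> 'a \<Rightarrow> real \<times> (real \<Rightarrow> complex)" where
  "scaled_bridge_loop W z t \<omega> =
     (t, \<lambda>s. z + complex_of_real (sqrt t) * (W (s / t) \<omega> - complex_of_real (s / t) * W 1 \<omega>))"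

definition brownian_loop_measure ::
    "'a measure \<Rightarrow> (real \<Rightarrow> 'a \<Rightarrow> complex) \<Rightarrow> (real \<times> (real \<Rightarrow> complex)) set \<Rightarrow> ennreal" where
  "brownian_loop_measure M W A =
     (\<integral>\<^sup>+ z. (\<integral>\<^sup>+ t. indicator {0<..} t * ennreal (1 / (2 * pi * t^2)) *
          emeasure M {\<omega> \<in> space M. scaled_bridge_loop W z t \<omega> \<in> A} \<partial>lborel) \<partial>lborel)"

definition loops_near_boundary :: "real \<Rightarrow> real \<Rightarrow> (real \<times> (real \<Rightarrow> complex)) set" where
  "loops_near_boundary t0 eps =
     {(t, \<gamma>). t \<ge> t0 \<and> \<gamma> ` {0..t} \<subseteq> unit_disk \<and> \<not> (\<gamma> ` {0..t} \<subseteq> inner_disk eps)}"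

end

theory Submission
  imports Defs
begin

text \<open>
  Fix the duration t and the Brownian path, and let K be the trace of the bridge loop of
  duration t rooted at 0. The loop rooted at z stays in D but not in D_eps exactly when
  1 - eps \<le> f z < 1, where f z = max {|z + k| : k \<in> K} is convex. The roots z in question
  therefore form a shell between two sublevel sets of f: the homothety centred at a minimiser a
  of f with ratio (1 - eps - f a) / (1 - f a) maps {f < 1} into {f < 1 - eps}, and the
  parallelogram law confines {f < 1} to a disk of radius 2 sqrt (1 - f a), so the shell has
  area at most 8 pi eps. It is empty unless the bridge at time 1/2 is shorter than 2 / sqrt t;
  being half the difference of two independent Gaussian increments, the bridge at time 1/2
  has this property with probability at most min 1 (16 / t) \<le> 4 / sqrt t. Integrating
  8 pi eps * 4 / sqrt t against dt / (2 pi t^2) over t \<ge> t0 gives c = 32/3.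
\<close>

section \<open>Shells between sublevel sets of convex functions\<close>

lemma measure_convex_sublevel_shell:
  fixes f :: "'a::euclidean_space \<Rightarrow> real"
  assumes conv: "convex_on UNIV f" and c': "f a < c'" "c' \<le> c"
    and fin: "emeasure lborel {z. f z < c} < \<infinity>"
  shows "measure lborel {z. c' \<le> f z \<and> f z < c}
           \<le> DIM('a) * ((c - c') / (c - f a)) * measure lborel {z. f z < c}"
proof -
  define S where "S = {z. f z < c}"
  define S' where "S' = {z. f z < c'}"
  define l where "l = (c' - f a) / (c - f a)"
  have l: "0 < l" "l \<le> 1" "1 - l = (c - c') / (c - f a)" "l * (c - f a) = c' - f a"
    using c' by (auto simp: l_def field_simps)
  have "continuous_on UNIV f"
    using conv by (intro convex_on_continuous) auto
  then have sets: "S \<in> sets lborel" "S' \<in> sets lborel"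
    unfolding S_def S'_def by (auto intro!: borel_open open_Collect_less continuous_intros)
  have "S' \<subseteq> S" using c' by (auto simp: S_def S'_def)
  have fin': "emeasure lborel S \<noteq> \<infinity>" "emeasure lborel S' \<noteq> \<infinity>"
    using fin emeasure_mono[OF \<open>S' \<subseteq> S\<close> sets(1)] by (auto simp: S_def top_unique)
  have "(\<lambda>z. l *\<^sub>R z + (1 - l) *\<^sub>R a) ` S \<subseteq> S'"
  proof clarify
    fix z assume "z \<in> S"
    have "f ((1 - l) *\<^sub>R a + l *\<^sub>R z) \<le> (1 - l) * f a + l * f z"
      using l by (intro convex_onD[OF conv]) auto
    also have "\<dots> < (1 - l) * f a + l * c"
      using l \<open>z \<in> S\<close> by (simp add: S_def)
    also have "\<dots> = c'"
      using l(4) by (simp add: algebra_simps)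
    finally show "l *\<^sub>R z + (1 - l) *\<^sub>R a \<in> S'"
      by (simp add: S'_def add.commute)
  qed
  then have "emeasure lebesgue ((\<lambda>z. l *\<^sub>R z + (1 - l) *\<^sub>R a) ` S) \<le> emeasure lebesgue S'"
    using sets(2) by (intro emeasure_mono) auto
  then have "ennreal (l ^ DIM('a)) * emeasure lborel S \<le> emeasure lborel S'"
    using l sets by (simp add: emeasure_lebesgue_affine)
  then have shrink: "l ^ DIM('a) * measure lborel S \<le> measure lborel S'"
    using l fin' by (simp add: emeasure_eq_ennreal_measure ennreal_mult[symmetric])
  have bernoulli: "1 - l ^ DIM('a) \<le> DIM('a) * (1 - l)"
    using Bernoulli_inequality[of "l - 1" "DIM('a)"] l by (simp add: algebra_simps)
  have "{z. c' \<le> f z \<and> f z < c} = S - S'" by (auto simp: S_def S'_def)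
  then have "measure lborel {z. c' \<le> f z \<and> f z < c} = measure lborel S - measure lborel S'"
    using measure_Diff[OF fin'(1) sets \<open>S' \<subseteq> S\<close>] by simp
  also have "\<dots> \<le> (1 - l ^ DIM('a)) * measure lborel S"
    using shrink by (simp add: algebra_simps)
  also have "\<dots> \<le> DIM('a) * (1 - l) * measure lborel S"
    using bernoulli by (intro mult_right_mono) auto
  finally show ?thesis by (simp add: l(3) S_def)
qed

section \<open>The largest norm of a translated compact set\<close>

definition sup_norm_shift :: "'a::real_normed_vector set \<Rightarrow> 'a \<Rightarrow> real" where
  "sup_norm_shift K z = (SUP k\<in>K. norm (z + k))"

lemma bdd_above_norm_shift:
  "compact K \<Longrightarrow> bdd_above ((\<lambda>k. norm (z + k)) ` K)"
  by (intro bounded_imp_bdd_above compact_imp_bounded compact_continuous_image continuous_intros)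

lemma norm_shift_le_sup_norm_shift:
  "compact K \<Longrightarrow> k \<in> K \<Longrightarrow> norm (z + k) \<le> sup_norm_shift K z"
  unfolding sup_norm_shift_def by (rule cSUP_upper) (auto simp: bdd_above_norm_shift)

lemma sup_norm_shift_attained:
  assumes "compact K" "K \<noteq> {}"
  obtains k where "k \<in> K" "sup_norm_shift K z = norm (z + k)"
proof -
  have "continuous_on K (\<lambda>k. norm (z + k))" by (intro continuous_intros)
  then obtain k where k: "k \<in> K" "\<And>k'. k' \<in> K \<Longrightarrow> norm (z + k') \<le> norm (z + k)"
    using continuous_attains_sup[OF assms] by blast
  then have "sup_norm_shift K z = norm (z + k)"
    unfolding sup_norm_shift_def by (intro cSup_eq_maximum) auto
  with k show ?thesis using that by blast
qed

lemma sup_norm_shift_less_iff: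
  assumes "compact K" "K \<noteq> {}"
  shows "sup_norm_shift K z < r \<longleftrightarrow> (\<forall>k\<in>K. norm (z + k) < r)"
  using norm_shift_le_sup_norm_shift[OF assms(1)] sup_norm_shift_attained[OF assms, of z]
  by (metis le_less_trans)

lemma sup_norm_shift_nonneg:
  "compact K \<Longrightarrow> K \<noteq> {} \<Longrightarrow> 0 \<le> sup_norm_shift K z"
  by (metis sup_norm_shift_attained norm_ge_zero)

lemma convex_on_sup_norm_shift:
  assumes "compact K" "K \<noteq> {}"
  shows "convex_on UNIV (sup_norm_shift K)"
proof (rule convex_onI)
  fix x y :: 'a and t :: real
  assume t: "0 < t" "t < 1"
  show "sup_norm_shift K ((1 - t) *\<^sub>R x + t *\<^sub>R y) \<le> (1 - t) * sup_norm_shift K x + t * sup_norm_shift K y"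
    unfolding sup_norm_shift_def[of K "(1 - t) *\<^sub>R x + t *\<^sub>R y"]
  proof (rule cSUP_least[OF assms(2)])
    fix k assume "k \<in> K"
    have "norm ((1 - t) *\<^sub>R x + t *\<^sub>R y + k) = norm ((1 - t) *\<^sub>R (x + k) + t *\<^sub>R (y + k))"
      by (simp add: algebra_simps)
    also have "\<dots> \<le> (1 - t) * norm (x + k) + t * norm (y + k)"
      using t norm_triangle_ineq[of "(1 - t) *\<^sub>R (x + k)" "t *\<^sub>R (y + k)"] by simp
    also have "\<dots> \<le> (1 - t) * sup_norm_shift K x + t * sup_norm_shift K y"
      using t norm_shift_le_sup_norm_shift[OF assms(1) \<open>k \<in> K\<close>]
      by (intro add_mono mult_left_mono) auto
    finally show "norm ((1 - t) *\<^sub>R x + t *\<^sub>R y + k) \<le> (1 - t) * sup_norm_shift K x + t * sup_norm_shift K y" .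
  qed
qed simp

lemma continuous_on_sup_norm_shift:
  fixes K :: "'a::euclidean_space set"
  shows "compact K \<Longrightarrow> K \<noteq> {} \<Longrightarrow> continuous_on UNIV (sup_norm_shift K)"
  by (intro convex_on_continuous convex_on_sup_norm_shift) auto

lemma sup_norm_shift_minimizer:
  fixes K :: "'a::euclidean_space set"
  assumes K: "compact K" "K \<noteq> {}"
  obtains a where "\<And>z. sup_norm_shift K a \<le> sup_norm_shift K z"
proof -
  obtain k0 where k0: "k0 \<in> K" using K by auto
  define R where "R = sup_norm_shift K (- k0)"
  have "continuous_on (cball (- k0) R) (sup_norm_shift K)"
    using continuous_on_sup_norm_shift[OF K] by (rule continuous_on_subset) simp
  moreover have "cball (- k0) R \<noteq> {}"
    using sup_norm_shift_nonneg[OF K, of "- k0"] by (simp add: R_def)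
  ultimately obtain a where a: "a \<in> cball (- k0) R" "\<forall>y\<in>cball (- k0) R. sup_norm_shift K a \<le> sup_norm_shift K y"
    using continuous_attains_inf[OF compact_cball] by metis
  \<comment> \<open>outside the ball the single term norm (z + k0) already exceeds R \<ge> sup_norm_shift K a\<close>
  have "sup_norm_shift K a \<le> sup_norm_shift K z" for z
  proof (cases "z \<in> cball (- k0) R")
    case False
    then have "R < norm (z + k0)"
      by (simp add: dist_norm norm_minus_commute add.commute)
    also have "\<dots> \<le> sup_norm_shift K z"
      by (rule norm_shift_le_sup_norm_shift[OF K(1) k0])
    finally show ?thesis
      using bspec[OF a(2), of "- k0"] sup_norm_shift_nonneg[OF K, of "- k0"] by (simp add: R_def)
  qed (use a(2) in blast)
  then show ?thesis by (rule that)
qed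

lemma dist_sup_norm_shift_minimizer:
  fixes K :: "'a::real_inner set"
  assumes K: "compact K" "K \<noteq> {}" and a: "\<And>z. sup_norm_shift K a \<le> sup_norm_shift K z"
  shows "(dist a z)\<^sup>2 \<le> 2 * ((sup_norm_shift K z)\<^sup>2 - (sup_norm_shift K a)\<^sup>2)"
proof -
  define p where "p = (1/2) *\<^sub>R (a + z)"
  obtain k where k: "k \<in> K" "sup_norm_shift K p = norm (p + k)"
    using sup_norm_shift_attained[OF K] .
  have parallelogram: "(norm (u + v))\<^sup>2 = 2 * (norm u)\<^sup>2 + 2 * (norm v)\<^sup>2 - (norm (u - v))\<^sup>2" for u v :: 'a
    by (simp add: power2_norm_eq_inner inner_simps inner_commute)
  have "p + k = (1/2) *\<^sub>R ((a + k) + (z + k))"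
    by (simp add: p_def algebra_simps flip: scaleR_add_left)
  then have "4 * (norm (p + k))\<^sup>2 = (norm ((a + k) + (z + k)))\<^sup>2"
    by (simp add: power_divide)
  also have "\<dots> = 2 * (norm (a + k))\<^sup>2 + 2 * (norm (z + k))\<^sup>2 - (dist a z)\<^sup>2"
    using parallelogram[of "a + k" "z + k"] by (simp add: dist_norm)
  also have "\<dots> \<le> 2 * (sup_norm_shift K a)\<^sup>2 + 2 * (sup_norm_shift K z)\<^sup>2 - (dist a z)\<^sup>2"
    using norm_shift_le_sup_norm_shift[OF K(1) k(1)] by (simp add: power_mono add_mono)
  finally have "4 * (sup_norm_shift K p)\<^sup>2 \<le> 2 * (sup_norm_shift K a)\<^sup>2 + 2 * (sup_norm_shift K z)\<^sup>2 - (dist a z)\<^sup>2"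
    using k(2) by simp
  moreover have "(sup_norm_shift K a)\<^sup>2 \<le> (sup_norm_shift K p)\<^sup>2"
    using a sup_norm_shift_nonneg[OF K] by (simp add: power_mono)
  ultimately show ?thesis unfolding right_diff_distrib by linarith
qed

lemma sup_norm_shift_sublevel_subset_ball:
  fixes K :: "'a::real_inner set"
  assumes K: "compact K" "K \<noteq> {}" and a: "\<And>z. sup_norm_shift K a \<le> sup_norm_shift K z"
    and "sup_norm_shift K a < 1"
  shows "{z. sup_norm_shift K z < 1} \<subseteq> ball a (2 * sqrt (1 - sup_norm_shift K a))"
proof
  let ?m = "sup_norm_shift K a"
  fix z assume "z \<in> {z. sup_norm_shift K z < 1}"
  then have "(sup_norm_shift K z)\<^sup>2 < 1"
    using sup_norm_shift_nonneg[OF K] by (simp add: power_less_one_iff abs_less_iff)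
  then have "(dist a z)\<^sup>2 < 2 * (1 - ?m\<^sup>2)"
    using dist_sup_norm_shift_minimizer[OF K a, of z] by simp
  also have "\<dots> = 4 * (1 - ?m) - 2 * (1 - ?m)\<^sup>2"
    by (simp add: power2_eq_square algebra_simps)
  also have "\<dots> \<le> (2 * sqrt (1 - ?m))\<^sup>2"
    using \<open>?m < 1\<close> by (simp add: power_mult_distrib)
  finally have "dist a z < 2 * sqrt (1 - ?m)"
    by (rule power_less_imp_less_base) (use \<open>?m < 1\<close> in simp)
  then show "z \<in> ball a (2 * sqrt (1 - ?m))" by simp
qed

lemma emeasure_ball_complex:
  "0 \<le> r \<Longrightarrow> emeasure lborel (ball (c::complex) r) = ennreal (pi * r\<^sup>2)"
  by (simp add: emeasure_ball unit_ball_vol_2)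

lemma emeasure_sup_norm_shift_sublevel_le:
  fixes K :: "complex set"
  assumes K: "compact K" "K \<noteq> {}" and a: "\<And>z. sup_norm_shift K a \<le> sup_norm_shift K z"
  shows "emeasure lborel {z. sup_norm_shift K z < 1} \<le> ennreal (4 * pi * (1 - sup_norm_shift K a))"
proof (cases "sup_norm_shift K a < 1")
  case True
  then have "emeasure lborel {z. sup_norm_shift K z < 1}
      \<le> emeasure lborel (ball a (2 * sqrt (1 - sup_norm_shift K a)))"
    by (intro emeasure_mono sup_norm_shift_sublevel_subset_ball[OF K a]) auto
  then show ?thesis
    using True by (simp add: emeasure_ball_complex power_mult_distrib algebra_simps)
next
  case False
  then have "{z. sup_norm_shift K z < 1} = {}"
    using a by (auto simp: not_less intro: order.trans)
  then show ?thesis by simp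
qed

lemma emeasure_sup_norm_shift_shell_le:
  fixes K :: "complex set"
  assumes K: "compact K" "K \<noteq> {}" and eps: "0 < eps"
  shows "emeasure lborel {z. 1 - eps \<le> sup_norm_shift K z \<and> sup_norm_shift K z < 1} \<le> ennreal (8 * pi * eps)"
proof -
  let ?f = "sup_norm_shift K"
  define S where "S = {z. ?f z < 1}"
  define T where "T = {z. 1 - eps \<le> ?f z \<and> ?f z < 1}"
  obtain a where a: "\<And>z. ?f a \<le> ?f z"
    using sup_norm_shift_minimizer[OF K] by blast
  define m where "m = ?f a"
  have S_le: "emeasure lborel S \<le> ennreal (4 * pi * (1 - m))"
    unfolding S_def m_def by (rule emeasure_sup_norm_shift_sublevel_le[OF K a])
  have "continuous_on UNIV ?f"
    using K by (rule continuous_on_sup_norm_shift)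
  then have [measurable]: "?f \<in> borel_measurable lborel"
    by (simp add: borel_measurable_continuous_onI)
  have sets: "S \<in> sets lborel" "T \<in> sets lborel"
    unfolding S_def T_def by measurable
  have "T \<subseteq> S" by (auto simp: S_def T_def)
  show ?thesis
  proof (cases "m < 1 - eps")
    case False
    have "emeasure lborel T \<le> emeasure lborel S"
      using sets \<open>T \<subseteq> S\<close> by (intro emeasure_mono) auto
    also have "\<dots> \<le> ennreal (8 * pi * eps)"
    proof -
      have "4 * pi * (1 - m) \<le> 4 * pi * (2 * eps)"
        using False eps by (intro mult_left_mono) auto
      then show ?thesis
        using S_le by (elim order.trans) (simp add: ennreal_leI algebra_simps)
    qed
    finally show ?thesis by (simp add: T_def)
  next
    case True
    have finS: "emeasure lborel S < \<infinity>"
      using S_le by (rule le_less_trans) simp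
    have measS: "measure lborel S \<le> 4 * pi * (1 - m)"
      using S_le finS True eps by (simp add: emeasure_eq_ennreal_measure)
    have "measure lborel T \<le> DIM(complex) * (eps / (1 - m)) * measure lborel S"
      using measure_convex_sublevel_shell[OF convex_on_sup_norm_shift[OF K], of a "1 - eps" 1] True eps finS
      by (simp add: S_def T_def m_def)
    also have "\<dots> \<le> 2 * (eps / (1 - m)) * (4 * pi * (1 - m))"
      using mult_left_mono[OF measS, of "2 * (eps / (1 - m))"] True eps by simp
    also have "\<dots> = 8 * pi * eps"
      using True eps by (simp add: field_simps)
    finally have "measure lborel T \<le> 8 * pi * eps" .
    moreover have "emeasure lborel T \<noteq> \<infinity>"
      using emeasure_mono[OF \<open>T \<subseteq> S\<close> sets(1)] finS by (auto simp: top_unique)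
    ultimately show ?thesis
      by (simp add: T_def[symmetric] emeasure_eq_ennreal_measure ennreal_leI)
  qed
qed

section \<open>Independent Gaussian increments\<close>

lemma emeasure_indep_dist_less_le:
  fixes X Y :: "'b \<Rightarrow> 'a::euclidean_space"
  assumes M: "prob_space M" and ind: "prob_space.indep_var M borel X borel Y"
    and [measurable]: "X \<in> borel_measurable M" "Y \<in> borel_measurable M"
    and ball: "\<And>x. emeasure (distr M borel Y) (ball x r) \<le> B"
  shows "emeasure M {\<omega> \<in> space M. dist (X \<omega>) (Y \<omega>) < r} \<le> B"
proof -
  interpret prob_space M by (fact M)
  interpret PX: prob_space "distr M borel X" by (rule prob_space_distr) simp
  interpret PY: prob_space "distr M borel Y" by (rule prob_space_distr) simp
  interpret pair_sigma_finite "distr M borel X" "distr M borel Y" ..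
  define D where "D = {p \<in> space (borel \<Otimes>\<^sub>M borel). dist (fst p) (snd p :: 'a) < r}"
  have D[measurable]: "D \<in> sets (borel \<Otimes>\<^sub>M borel)"
    unfolding D_def by measurable
  have "emeasure M {\<omega> \<in> space M. dist (X \<omega>) (Y \<omega>) < r} = emeasure (distr M (borel \<Otimes>\<^sub>M borel) (\<lambda>\<omega>. (X \<omega>, Y \<omega>))) D"
    by (subst emeasure_distr[OF _ D]) (auto simp: D_def space_pair_measure vimage_def Int_def conj_commute)
  also have "\<dots> = emeasure (distr M borel X \<Otimes>\<^sub>M distr M borel Y) D"
    using ind by (simp add: indep_var_distribution_eq)
  also have "\<dots> = (\<integral>\<^sup>+x. emeasure (distr M borel Y) (Pair x -` D) \<partial>distr M borel X)"
    by (rule PY.emeasure_pair_measure_alt) simp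
  also have "\<dots> \<le> (\<integral>\<^sup>+x. B \<partial>distr M borel X)"
    by (intro nn_integral_mono) (simp add: D_def space_pair_measure ball_def[symmetric] ball)
  also have "\<dots> = B"
    using PX.emeasure_space_1 by simp
  finally show ?thesis .
qed

lemma emeasure_distr_le_density_bound:
  assumes "distributed M lborel Y g" "\<And>x. g x \<le> C" "A \<in> sets borel"
  shows "emeasure (distr M borel Y) A \<le> C * emeasure lborel A"
proof -
  have "emeasure (distr M borel Y) A = emeasure (density lborel g) A"
    using assms(1) unfolding distributed_def by (metis distr_cong sets_lborel)
  also have "\<dots> = (\<integral>\<^sup>+x. g x * indicator A x \<partial>lborel)"
    using assms(1,3) by (simp add: emeasure_density distributed_borel_measurable)
  also have "\<dots> \<le> (\<integral>\<^sup>+x. C * indicator A x \<partial>lborel)"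
    by (intro nn_integral_mono mult_right_mono assms(2)) auto
  also have "\<dots> = C * emeasure lborel A"
    using assms(3) by (simp add: nn_integral_cmult_indicator)
  finally show ?thesis .
qed

lemma gauss2_density_le:
  "0 < h \<Longrightarrow> gauss2_density h z \<le> 1 / (2 * pi * h)"
  unfolding gauss2_density_def by (intro divide_right_mono) auto

lemma planar_BM_indep_increments:
  assumes BM: "planar_BM M W" and "0 \<le> r" "r < s" "s < u"
  shows "prob_space.indep_var M borel (\<lambda>\<omega>. W s \<omega> - W r \<omega>) borel (\<lambda>\<omega>. W u \<omega> - W s \<omega>)"
proof -
  interpret prob_space M using BM by (simp add: planar_BM_def)
  define ts :: "nat \<Rightarrow> real" where "ts = (\<lambda>i. if i = 0 then r else if i = 1 then s else u)"
  define X where "X = (\<lambda>i \<omega>. W (ts (Suc i)) \<omega> - W (ts i) \<omega>)"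
  have increments: "\<And>ts n. 0 \<le> ts 0 \<and> (\<forall>i<n. ts i < ts (Suc i)) \<Longrightarrow>
      indep_vars (\<lambda>_. borel) (\<lambda>i \<omega>. W (ts (Suc i)) \<omega> - W (ts i) \<omega>) {..<n}"
    using BM unfolding planar_BM_def by blast
  have "indep_vars (\<lambda>_. borel) X {..<2}"
    unfolding X_def by (rule increments) (use assms(2-) in \<open>auto simp: ts_def less_2_cases_iff\<close>)
  then have "indep_var (Pi\<^sub>M {0} (\<lambda>_. borel)) (\<lambda>\<omega>. restrict (\<lambda>i. X i \<omega>) {0})
                     (Pi\<^sub>M {1} (\<lambda>_. borel)) (\<lambda>\<omega>. restrict (\<lambda>i. X i \<omega>) {1})"
    by (rule indep_var_restrict) auto
  then have "indep_var borel ((\<lambda>f. f 0) \<circ> (\<lambda>\<omega>. restrict (\<lambda>i. X i \<omega>) {0}))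
                     borel ((\<lambda>f. f 1) \<circ> (\<lambda>\<omega>. restrict (\<lambda>i. X i \<omega>) {1}))"
    by (rule indep_var_compose) (auto intro: measurable_component_singleton)
  then show ?thesis
    by (simp add: o_def X_def ts_def)
qed

lemma prob_bridge_midpoint_less:
  assumes BM: "planar_BM M W" and r: "0 \<le> r"
  shows "emeasure M {\<omega> \<in> space M. cmod (W (1/2) \<omega> - W 1 \<omega> / 2) < r} \<le> ennreal (4 * r\<^sup>2)"
proof -
  have M: "prob_space M" and [measurable]: "\<And>t. W t \<in> borel_measurable M"
    and W0: "\<And>\<omega>. \<omega> \<in> space M \<Longrightarrow> W 0 \<omega> = 0"
    and increment: "\<And>s t. 0 \<le> s \<and> s < t \<Longrightarrow>
      distributed M lborel (\<lambda>\<omega>. W t \<omega> - W s \<omega>) (\<lambda>z. ennreal (gauss2_density (t - s) z))"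
    using BM unfolding planar_BM_def by auto
  have distr_Y: "distributed M lborel (\<lambda>\<omega>. W 1 \<omega> - W (1/2) \<omega>) (\<lambda>z. ennreal (gauss2_density (1/2) z))"
    using increment[of "1/2" 1] by simp
  \<comment> \<open>twice the bridge at time 1/2 is the difference of two independent increments\<close>
  have "{\<omega> \<in> space M. cmod (W (1/2) \<omega> - W 1 \<omega> / 2) < r}
      = {\<omega> \<in> space M. dist (W (1/2) \<omega> - W 0 \<omega>) (W 1 \<omega> - W (1/2) \<omega>) < 2 * r}"
  proof -
    have "dist (W (1/2) \<omega> - W 0 \<omega>) (W 1 \<omega> - W (1/2) \<omega>) = 2 * cmod (W (1/2) \<omega> - W 1 \<omega> / 2)"
      if "\<omega> \<in> space M" for \<omega>
      using W0[OF that] norm_mult[of 2 "W (1/2) \<omega> - W 1 \<omega> / 2"]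
      by (simp add: dist_norm algebra_simps)
    then show ?thesis by auto
  qed
  also have "emeasure M \<dots> \<le> ennreal (1 / pi) * ennreal (pi * (2 * r)\<^sup>2)"
  proof (rule emeasure_indep_dist_less_le[OF M planar_BM_indep_increments[OF BM]])
    fix x
    show "emeasure (distr M borel (\<lambda>\<omega>. W 1 \<omega> - W (1/2) \<omega>)) (ball x (2 * r)) \<le> ennreal (1 / pi) * ennreal (pi * (2 * r)\<^sup>2)"
      using emeasure_distr_le_density_bound[OF distr_Y, of "ennreal (1 / pi)" "ball x (2 * r)"]
        gauss2_density_le[of "1/2"] r
      by (simp add: emeasure_ball_complex ennreal_leI)
  qed auto
  also have "\<dots> = ennreal (4 * r\<^sup>2)"
    by (simp add: ennreal_mult[symmetric] power_mult_distrib)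
  finally show ?thesis .
qed


section \<open>Brownian bridge loops near the boundary of the disk\<close>

lemma infdist_sphere_0:
  fixes x :: "'a::euclidean_space"
  assumes x: "norm x \<le> r"
  shows "infdist x (sphere 0 r) = r - norm x"
proof (rule antisym)
  have "r \<ge> 0" using x norm_ge_zero order.trans by blast
  obtain p where p: "p \<in> sphere 0 r" "dist x p = r - norm x"
  proof (cases "x = 0")
    case True
    then show ?thesis
      using vector_choose_size[OF \<open>r \<ge> 0\<close>] that by (auto simp: dist_norm)
  next
    case False
    have "x - (r / norm x) *\<^sub>R x = (1 - r / norm x) *\<^sub>R x"
      by (simp add: algebra_simps)
    then have "dist x ((r / norm x) *\<^sub>R x) = \<bar>1 - r / norm x\<bar> * norm x"
      by (simp add: dist_norm)
    also have "\<dots> = r - norm x"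
      using False x by (simp add: abs_if field_simps)
    finally show ?thesis
      using that[of "(r / norm x) *\<^sub>R x"] False \<open>r \<ge> 0\<close> by simp
  qed
  then show "infdist x (sphere 0 r) \<le> r - norm x"
    using infdist_le[OF p(1), of x] by simp
  have "r - norm x \<le> dist x a" if "a \<in> sphere 0 r" for a
    using that norm_triangle_ineq2[of a x] by (simp add: dist_norm norm_minus_commute)
  then show "r - norm x \<le> infdist x (sphere 0 r)"
    using p(1) by (subst infdist_notempty) (auto intro!: cINF_greatest)
qed

lemma inner_disk_eq_ball: "0 \<le> eps \<Longrightarrow> inner_disk eps = ball 0 (1 - eps)"
  by (auto simp: inner_disk_def unit_disk_def infdist_sphere_0)

lemma translate_near_boundary_iff:
  fixes K :: "complex set"
  assumes "compact K" "K \<noteq> {}" "0 \<le> eps"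
  shows "((+) z ` K \<subseteq> unit_disk \<and> \<not> (+) z ` K \<subseteq> inner_disk eps) \<longleftrightarrow>
           1 - eps \<le> sup_norm_shift K z \<and> sup_norm_shift K z < 1"
proof -
  have "(+) z ` K \<subseteq> ball 0 r \<longleftrightarrow> sup_norm_shift K z < r" for r
    using sup_norm_shift_less_iff[OF assms(1,2)] by auto
  then show ?thesis
    by (auto simp: unit_disk_def inner_disk_eq_ball[OF assms(3)] not_less)
qed

definition bridge_range :: "(real \<Rightarrow> 'a \<Rightarrow> complex) \<Rightarrow> real \<Rightarrow> 'a \<Rightarrow> complex set" where
  "bridge_range W t \<omega> = (\<lambda>u. complex_of_real (sqrt t) * (W u \<omega> - complex_of_real u * W 1 \<omega>)) ` {0..1}"

lemma bridge_range_nonempty [simp]: "bridge_range W t \<omega> \<noteq> {}"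
  by (simp add: bridge_range_def)

lemma continuous_on_bridge:
  assumes "planar_BM M W" "\<omega> \<in> space M"
  shows "continuous_on {0..1} (\<lambda>u. complex_of_real (sqrt t) * (W u \<omega> - complex_of_real u * W 1 \<omega>))"
proof -
  have "continuous_on {0..1} (\<lambda>u. W u \<omega>)"
    using assms by (auto simp: planar_BM_def intro: continuous_on_subset)
  then show ?thesis by (intro continuous_intros)
qed

lemma compact_bridge_range:
  assumes "planar_BM M W" "\<omega> \<in> space M"
  shows "compact (bridge_range W t \<omega>)"
  unfolding bridge_range_def using continuous_on_bridge[OF assms] by (rule compact_continuous_image) simp

lemma zero_in_bridge_range:
  assumes "planar_BM M W" "\<omega> \<in> space M"
  shows "0 \<in> bridge_range W t \<omega>"
proof -
  have "W 0 \<omega> = 0" using assms by (simp add: planar_BM_def)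
  then show ?thesis
    unfolding bridge_range_def by (auto intro!: image_eqI[of _ _ 0])
qed

lemma bridge_midpoint_in_range:
  "complex_of_real (sqrt t) * (W (1/2) \<omega> - W 1 \<omega> / 2) \<in> bridge_range W t \<omega>"
  unfolding bridge_range_def by (auto intro!: image_eqI[of _ _ "1/2"])

lemma image_scaled_bridge_loop:
  assumes "0 < t"
  shows "snd (scaled_bridge_loop W z t \<omega>) ` {0..t} = (+) z ` bridge_range W t \<omega>"
proof -
  have "(\<lambda>s. s / t) ` {0..t} = {0..1}"
  proof (intro equalityI subsetI)
    fix u :: real assume "u \<in> {0..1}"
    then have "u * t \<in> {0..t}" "u = u * t / t"
      using assms by (auto simp: mult_le_cancel_right1)
    then show "u \<in> (\<lambda>s. s / t) ` {0..t}" by blast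
  qed (use assms in auto)
  then show ?thesis
    unfolding scaled_bridge_loop_def bridge_range_def snd_conv image_image
    using image_image[of "\<lambda>u. z + complex_of_real (sqrt t) * (W u \<omega> - complex_of_real u * W 1 \<omega>)" "\<lambda>s. s / t" "{0..t}"]
    by simp
qed

lemma scaled_bridge_loop_near_boundary_iff:
  assumes BM: "planar_BM M W" and \<omega>: "\<omega> \<in> space M" and "0 < t0" "0 \<le> eps"
  shows "scaled_bridge_loop W z t \<omega> \<in> loops_near_boundary t0 eps \<longleftrightarrow>
    t0 \<le> t \<and> 1 - eps \<le> sup_norm_shift (bridge_range W t \<omega>) z \<and> sup_norm_shift (bridge_range W t \<omega>) z < 1"
proof (cases "t0 \<le> t")
  case True
  then have "0 < t" using \<open>0 < t0\<close> by linarith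
  define \<gamma> where "\<gamma> = snd (scaled_bridge_loop W z t \<omega>)"
  have "scaled_bridge_loop W z t \<omega> = (t, \<gamma>)"
    by (simp add: scaled_bridge_loop_def \<gamma>_def)
  moreover have "\<gamma> ` {0..t} = (+) z ` bridge_range W t \<omega>"
    unfolding \<gamma>_def using \<open>0 < t\<close> by (rule image_scaled_bridge_loop)
  ultimately show ?thesis
    using True translate_near_boundary_iff[OF compact_bridge_range[OF BM \<omega>] bridge_range_nonempty \<open>0 \<le> eps\<close>]
    by (simp add: loops_near_boundary_def)
qed (simp add: scaled_bridge_loop_def loops_near_boundary_def)

lemma cSUP_closure_eq:
  fixes f :: "'a::metric_space \<Rightarrow> real"
  assumes f: "continuous_on (closure S) f" and bdd: "bdd_above (f ` closure S)" and "S \<noteq> {}"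
  shows "(SUP x\<in>S. f x) = (SUP x\<in>closure S. f x)"
proof (rule antisym)
  show "(SUP x\<in>S. f x) \<le> (SUP x\<in>closure S. f x)"
    by (rule cSUP_subset_mono[OF \<open>S \<noteq> {}\<close> bdd closure_subset]) simp
  have "bdd_above (f ` S)"
    by (rule bdd_above_mono[OF bdd image_mono[OF closure_subset]])
  show "(SUP x\<in>closure S. f x) \<le> (SUP x\<in>S. f x)"
  proof (rule cSUP_least)
    fix x assume "x \<in> closure S"
    then show "f x \<le> (SUP x\<in>S. f x)"
      by (rule continuous_le_on_closure[OF f]) (rule cSUP_upper[OF _ \<open>bdd_above (f ` S)\<close>])
  qed (use \<open>S \<noteq> {}\<close> in simp)
qed

lemma closure_Rats_Icc: "closure (\<rat> \<inter> {0..1}) = {0..1::real}"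
proof -
  have "closure ({0..1} \<inter> \<rat>) = closure {0..1::real}"
  proof (rule closure_convex_Int_superset)
    show "interior {0..1::real} \<subseteq> closure \<rat>"
      by (simp add: Rats_closure_real)
    have "1/2 \<in> interior {0..1::real}" by simp
    then show "interior {0..1::real} \<noteq> {}" by blast
  qed (rule convex_real_interval)
  then show ?thesis by (simp add: Int_commute)
qed

lemma sup_norm_shift_bridge_range_Rats:
  assumes BM: "planar_BM M W" and \<omega>: "\<omega> \<in> space M"
  shows "sup_norm_shift (bridge_range W t \<omega>) z =
    (SUP q\<in>\<rat> \<inter> {0..1}. cmod (z + complex_of_real (sqrt t) * (W q \<omega> - complex_of_real q * W 1 \<omega>)))"
proof -
  let ?g = "\<lambda>u. cmod (z + complex_of_real (sqrt t) * (W u \<omega> - complex_of_real u * W 1 \<omega>))"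
  have cont: "continuous_on {0..1} ?g"
    by (intro continuous_on_norm continuous_on_add continuous_on_const continuous_on_bridge[OF BM \<omega>])
  moreover have "bdd_above (?g ` {0..1})"
    by (intro bounded_imp_bdd_above compact_imp_bounded compact_continuous_image[OF cont] compact_Icc)
  moreover have "\<rat> \<inter> {0..1::real} \<noteq> {}"
    by (metis IntI Rats_0 atLeastAtMost_iff empty_iff order_refl zero_le_one)
  ultimately have "(SUP q\<in>\<rat> \<inter> {0..1}. ?g q) = (SUP u\<in>{0..1}. ?g u)"
    using cSUP_closure_eq[of "\<rat> \<inter> {0..1}" ?g] unfolding closure_Rats_Icc by blast
  then show ?thesis
    unfolding sup_norm_shift_def bridge_range_def image_image by (rule sym)
qed

lemma borel_measurable_sup_norm_shift_bridge_range:
  fixes M :: "'a measure"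
  assumes BM: "planar_BM M W"
  shows "(\<lambda>x. sup_norm_shift (bridge_range W (snd (fst x)) (snd x)) (fst (fst x)))
    \<in> borel_measurable ((lborel \<Otimes>\<^sub>M lborel) \<Otimes>\<^sub>M M)"
proof -
  have [measurable]: "\<And>t. W t \<in> borel_measurable M"
    using BM by (simp add: planar_BM_def)
  have "(\<lambda>x. SUP q\<in>\<rat> \<inter> {0..1}. cmod (fst (fst x) + complex_of_real (sqrt (snd (fst x)))
            * (W q (snd x) - complex_of_real q * W 1 (snd x))))
        \<in> borel_measurable ((lborel \<Otimes>\<^sub>M lborel) \<Otimes>\<^sub>M M)"
  proof (rule borel_measurable_cSUP)
    show "countable (\<rat> \<inter> {0..1::real})"
      by (rule countable_subset[OF _ countable_rat]) auto
  next
    fix x :: "(complex \<times> real) \<times> 'a"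
    assume "x \<in> space ((lborel \<Otimes>\<^sub>M lborel) \<Otimes>\<^sub>M M)"
    then have "snd x \<in> space M" by (auto simp: space_pair_measure)
    then have "bdd_above ((\<lambda>k. cmod (fst (fst x) + k)) ` bridge_range W (snd (fst x)) (snd x))"
      by (intro bdd_above_norm_shift compact_bridge_range[OF BM])
    then show "bdd_above ((\<lambda>q. cmod (fst (fst x) + complex_of_real (sqrt (snd (fst x)))
            * (W q (snd x) - complex_of_real q * W 1 (snd x)))) ` (\<rat> \<inter> {0..1}))"
      by (rule bdd_above_mono) (auto simp: bridge_range_def)
  qed measurable
  then show ?thesis
    by (rule measurable_cong[THEN iffD1, rotated])
       (simp add: sup_norm_shift_bridge_range_Rats[OF BM] space_pair_measure mem_Times_iff)
qed

definition near_boundary_events ::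
    "'a measure \<Rightarrow> (real \<Rightarrow> 'a \<Rightarrow> complex) \<Rightarrow> real \<Rightarrow> real \<Rightarrow> ((complex \<times> real) \<times> 'a) set" where
  "near_boundary_events M W t0 eps = {x \<in> space ((lborel \<Otimes>\<^sub>M lborel) \<Otimes>\<^sub>M M).
     scaled_bridge_loop W (fst (fst x)) (snd (fst x)) (snd x) \<in> loops_near_boundary t0 eps}"

lemma mem_near_boundary_events:
  "((z, t), \<omega>) \<in> near_boundary_events M W t0 eps \<longleftrightarrow>
     \<omega> \<in> space M \<and> scaled_bridge_loop W z t \<omega> \<in> loops_near_boundary t0 eps"
  by (simp add: near_boundary_events_def space_pair_measure)

lemma sets_near_boundary_events:
  assumes BM: "planar_BM M W" and "0 < t0" "0 \<le> eps"
  shows "near_boundary_events M W t0 eps \<in> sets ((lborel \<Otimes>\<^sub>M lborel) \<Otimes>\<^sub>M M)"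
proof -
  define G where "G x = sup_norm_shift (bridge_range W (snd (fst x)) (snd x)) (fst (fst x))" for x
  have [measurable]: "G \<in> borel_measurable ((lborel \<Otimes>\<^sub>M lborel) \<Otimes>\<^sub>M M)"
    unfolding G_def by (rule borel_measurable_sup_norm_shift_bridge_range[OF BM])
  have "near_boundary_events M W t0 eps
      = {x \<in> space ((lborel \<Otimes>\<^sub>M lborel) \<Otimes>\<^sub>M M). t0 \<le> snd (fst x) \<and> 1 - eps \<le> G x \<and> G x < 1}"
    using scaled_bridge_loop_near_boundary_iff[OF BM _ assms(2,3)]
    by (auto simp: near_boundary_events_def G_def space_pair_measure)
  also have "\<dots> \<in> sets ((lborel \<Otimes>\<^sub>M lborel) \<Otimes>\<^sub>M M)"
    by measurable
  finally show ?thesis .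
qed

section \<open>Integrating over roots and durations\<close>

lemma bridge_midpoint_less_if_inside:
  assumes BM: "planar_BM M W" and \<omega>: "\<omega> \<in> space M" and t: "0 < t"
    and inside: "sup_norm_shift (bridge_range W t \<omega>) z < 1"
  shows "cmod (W (1/2) \<omega> - W 1 \<omega> / 2) < 2 / sqrt t"
proof -
  let ?mid = "complex_of_real (sqrt t) * (W (1/2) \<omega> - W 1 \<omega> / 2)"
  have K: "\<forall>k\<in>bridge_range W t \<omega>. cmod (z + k) < 1"
    using inside sup_norm_shift_less_iff[OF compact_bridge_range[OF BM \<omega>] bridge_range_nonempty] by simp
  have "cmod z < 1" "cmod (z + ?mid) < 1"
    using bspec[OF K zero_in_bridge_range[OF BM \<omega>]] bspec[OF K bridge_midpoint_in_range] by simp_all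
  then have "sqrt t * cmod (W (1/2) \<omega> - W 1 \<omega> / 2) < 2"
    using norm_triangle_ineq4[of "z + ?mid" z] t by (simp add: norm_mult)
  then show ?thesis
    using t by (simp add: field_simps)
qed

lemma emeasure_near_boundary_slice_le:
  assumes BM: "planar_BM M W" and \<omega>: "\<omega> \<in> space M" and "0 < t0" "t0 \<le> t" "0 < eps"
  shows "emeasure lborel {z. scaled_bridge_loop W z t \<omega> \<in> loops_near_boundary t0 eps}
    \<le> ennreal (8 * pi * eps) * indicator {\<omega> \<in> space M. cmod (W (1/2) \<omega> - W 1 \<omega> / 2) < 2 / sqrt t} \<omega>"
proof -
  let ?f = "sup_norm_shift (bridge_range W t \<omega>)"
  have "0 < t" using assms(3,4) by linarith
  have slice: "{z. scaled_bridge_loop W z t \<omega> \<in> loops_near_boundary t0 eps} = {z. 1 - eps \<le> ?f z \<and> ?f z < 1}"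
    using scaled_bridge_loop_near_boundary_iff[OF BM \<omega> \<open>0 < t0\<close>, of eps] assms(4,5) by simp
  show ?thesis
  proof (cases "cmod (W (1/2) \<omega> - W 1 \<omega> / 2) < 2 / sqrt t")
    case True
    then show ?thesis
      unfolding slice
      using emeasure_sup_norm_shift_shell_le[OF compact_bridge_range[OF BM \<omega>] bridge_range_nonempty \<open>0 < eps\<close>] \<omega>
      by simp
  next
    case False
    then have "{z. 1 - eps \<le> ?f z \<and> ?f z < 1} = {}"
      using bridge_midpoint_less_if_inside[OF BM \<omega> \<open>0 < t\<close>] by auto
    then have "emeasure lborel {z. scaled_bridge_loop W z t \<omega> \<in> loops_near_boundary t0 eps} = 0"
      by (simp only: slice emeasure_empty)
    then show ?thesis by simp
  qed
qed

lemma prob_bridge_midpoint_less_sqrt: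
  assumes BM: "planar_BM M W" and "0 < t"
  shows "emeasure M {\<omega> \<in> space M. cmod (W (1/2) \<omega> - W 1 \<omega> / 2) < 2 / sqrt t} \<le> ennreal (4 / sqrt t)"
proof -
  interpret prob_space M using BM by (simp add: planar_BM_def)
  define B where "B = {\<omega> \<in> space M. cmod (W (1/2) \<omega> - W 1 \<omega> / 2) < 2 / sqrt t}"
  define c where "c = 4 / sqrt t"
  have "c \<ge> 0" using \<open>0 < t\<close> by (simp add: c_def)
  have "emeasure M B \<le> ennreal (4 * (2 / sqrt t)\<^sup>2)"
    unfolding B_def using \<open>0 < t\<close> by (intro prob_bridge_midpoint_less[OF BM]) simp
  then have "prob B \<le> c\<^sup>2"
    using \<open>0 < t\<close> by (simp add: c_def emeasure_eq_measure power_divide)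
  \<comment> \<open>combined with the trivial bound 1, the bound 16/t on the probability improves to 4/sqrt t\<close>
  then have "prob B \<le> c"
  proof (cases "c \<le> 1")
    case True
    then have "c\<^sup>2 \<le> c"
      using mult_left_le[OF True \<open>c \<ge> 0\<close>] by (simp add: power2_eq_square)
    with \<open>prob B \<le> c\<^sup>2\<close> show ?thesis by linarith
  qed (use prob_le_1[of B] in linarith)
  then show ?thesis
    by (simp add: B_def c_def emeasure_eq_measure ennreal_leI)
qed

lemma nn_integral_prob_near_boundary_swap:
  fixes M :: "'a measure"
  assumes BM: "planar_BM M W" and "0 < t0" "0 \<le> eps"
  shows "(\<integral>\<^sup>+z. emeasure M {\<omega> \<in> space M. scaled_bridge_loop W z t \<omega> \<in> loops_near_boundary t0 eps} \<partial>lborel)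
    = (\<integral>\<^sup>+\<omega>. emeasure lborel {z. scaled_bridge_loop W z t \<omega> \<in> loops_near_boundary t0 eps} \<partial>M)"
proof -
  interpret P: prob_space M using BM by (simp add: planar_BM_def)
  define E where "E = near_boundary_events M W t0 eps"
  have [measurable]: "E \<in> sets ((lborel \<Otimes>\<^sub>M lborel) \<Otimes>\<^sub>M M)"
    unfolding E_def using sets_near_boundary_events[OF assms] .
  have "emeasure M {\<omega> \<in> space M. scaled_bridge_loop W z t \<omega> \<in> loops_near_boundary t0 eps}
      = (\<integral>\<^sup>+\<omega>. indicator E ((z, t), \<omega>) \<partial>M)" for z
  proof -
    have "{\<omega> \<in> space M. scaled_bridge_loop W z t \<omega> \<in> loops_near_boundary t0 eps} = Pair (z, t) -` E"
      by (auto simp: E_def mem_near_boundary_events)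
    moreover have "Pair (z, t) -` E \<in> sets M"
      by (rule sets_Pair1) measurable
    ultimately show ?thesis
      by (simp add: indicator_def flip: nn_integral_indicator)
  qed
  moreover have "emeasure lborel {z. scaled_bridge_loop W z t \<omega> \<in> loops_near_boundary t0 eps}
      = (\<integral>\<^sup>+z. indicator E ((z, t), \<omega>) \<partial>lborel)" if "\<omega> \<in> space M" for \<omega>
  proof -
    have "{z. scaled_bridge_loop W z t \<omega> \<in> loops_near_boundary t0 eps} = {z. ((z, t), \<omega>) \<in> E}"
      using that by (simp add: E_def mem_near_boundary_events)
    moreover have "{z. ((z, t), \<omega>) \<in> E} \<in> sets lborel"
      using that by measurable
    ultimately show ?thesis
      by (simp add: indicator_def flip: nn_integral_indicator)
  qed
  ultimately show ?thesis
    by (simp cong: nn_integral_cong)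
       (intro pair_sigma_finite.Fubini'[symmetric] pair_sigma_finite.intro
         lborel.sigma_finite_measure_axioms P.sigma_finite_measure_axioms, measurable)
qed

lemma nn_integral_prob_near_boundary_le:
  fixes M :: "'a measure"
  assumes BM: "planar_BM M W" and "0 < t0" "t0 \<le> t" "0 < eps"
  shows "(\<integral>\<^sup>+z. emeasure M {\<omega> \<in> space M. scaled_bridge_loop W z t \<omega> \<in> loops_near_boundary t0 eps} \<partial>lborel)
    \<le> ennreal (32 * pi * eps / sqrt t)"
proof -
  interpret prob_space M using BM by (simp add: planar_BM_def)
  have "0 < t" using assms(2,3) by linarith
  have [measurable]: "\<And>t. W t \<in> borel_measurable M" using BM by (simp add: planar_BM_def)
  define Bad where "Bad = {\<omega> \<in> space M. cmod (W (1/2) \<omega> - W 1 \<omega> / 2) < 2 / sqrt t}"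
  have [measurable]: "Bad \<in> sets M" unfolding Bad_def by measurable
  have "(\<integral>\<^sup>+z. emeasure M {\<omega> \<in> space M. scaled_bridge_loop W z t \<omega> \<in> loops_near_boundary t0 eps} \<partial>lborel)
      = (\<integral>\<^sup>+\<omega>. emeasure lborel {z. scaled_bridge_loop W z t \<omega> \<in> loops_near_boundary t0 eps} \<partial>M)"
    using assms(4) by (intro nn_integral_prob_near_boundary_swap[OF BM \<open>0 < t0\<close>]) simp
  also have "\<dots> \<le> (\<integral>\<^sup>+\<omega>. ennreal (8 * pi * eps) * indicator Bad \<omega> \<partial>M)"
    unfolding Bad_def by (intro nn_integral_mono emeasure_near_boundary_slice_le[OF BM _ assms(2-4)])
  also have "\<dots> = ennreal (8 * pi * eps) * emeasure M Bad"
    by (simp add: nn_integral_cmult_indicator)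
  also have "\<dots> \<le> ennreal (8 * pi * eps) * ennreal (4 / sqrt t)"
    unfolding Bad_def by (intro mult_left_mono prob_bridge_midpoint_less_sqrt[OF BM \<open>0 < t\<close>]) simp
  also have "\<dots> = ennreal (8 * pi * eps * (4 / sqrt t))"
    using assms(4) \<open>0 < t\<close> by (intro ennreal_mult[symmetric]) auto
  also have "8 * pi * eps * (4 / sqrt t) = 32 * pi * eps / sqrt t"
    by simp
  finally show ?thesis .
qed

lemma nn_integral_powr_atLeast:
  assumes "0 < t0" "a < -1"
  shows "(\<integral>\<^sup>+t. ennreal (t powr a) * indicator {t0..} t \<partial>lborel) = ennreal (- (t0 powr (a + 1)) / (a + 1))"
  using has_integral_powr_to_inf[OF assms(2,1)] by (rule nn_integral_has_integral_lebesgue'[rotated]) simp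

lemma borel_measurable_prob_near_boundary:
  fixes M :: "'a measure"
  assumes BM: "planar_BM M W" and "0 < t0" "0 \<le> eps"
  shows "(\<lambda>(z, t). emeasure M {\<omega> \<in> space M. scaled_bridge_loop W z t \<omega> \<in> loops_near_boundary t0 eps})
    \<in> borel_measurable (lborel \<Otimes>\<^sub>M lborel)"
proof -
  interpret prob_space M using BM by (simp add: planar_BM_def)
  have "(\<lambda>(z, t). emeasure M {\<omega> \<in> space M. scaled_bridge_loop W z t \<omega> \<in> loops_near_boundary t0 eps})
      = (\<lambda>p. emeasure M (Pair p -` near_boundary_events M W t0 eps))"
    by (auto simp: fun_eq_iff mem_near_boundary_events intro!: arg_cong[where f = "emeasure M"])
  then show ?thesis
    using measurable_emeasure_Pair[OF sets_near_boundary_events[OF assms]] by simp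
qed

lemma loop_density_integral_le:
  fixes M :: "'a measure"
  assumes BM: "planar_BM M W" and "0 < t0" "0 < eps"
  shows "(\<integral>\<^sup>+z. indicator {0<..} t * ennreal (1 / (2 * pi * t\<^sup>2))
            * emeasure M {\<omega> \<in> space M. scaled_bridge_loop W z t \<omega> \<in> loops_near_boundary t0 eps} \<partial>lborel)
    \<le> ennreal (16 * eps) * (ennreal (t powr (-5/2)) * indicator {t0..} t)"
proof (cases "t0 \<le> t")
  case True
  then have "0 < t" using \<open>0 < t0\<close> by linarith
  have "t powr (5/2) = t powr 2 * t powr (1/2)"
    using powr_add[of t 2 "1/2"] by simp
  then have powr: "t powr (-5/2) = 1 / (t\<^sup>2 * sqrt t)"
    using \<open>0 < t\<close> by (simp add: powr_minus_divide powr_half_sqrt)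
  have [measurable]: "(\<lambda>z. emeasure M {\<omega> \<in> space M. scaled_bridge_loop W z t \<omega> \<in> loops_near_boundary t0 eps})
      \<in> borel_measurable lborel"
    using measurable_compose[OF _ borel_measurable_prob_near_boundary[OF BM \<open>0 < t0\<close> less_imp_le[OF \<open>0 < eps\<close>]],
        of "\<lambda>z. (z, t)" lborel]
    by simp
  have "(\<integral>\<^sup>+z. indicator {0<..} t * ennreal (1 / (2 * pi * t\<^sup>2))
            * emeasure M {\<omega> \<in> space M. scaled_bridge_loop W z t \<omega> \<in> loops_near_boundary t0 eps} \<partial>lborel)
      = ennreal (1 / (2 * pi * t\<^sup>2))
          * (\<integral>\<^sup>+z. emeasure M {\<omega> \<in> space M. scaled_bridge_loop W z t \<omega> \<in> loops_near_boundary t0 eps} \<partial>lborel)"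
    using \<open>0 < t\<close> by (simp add: nn_integral_cmult)
  also have "\<dots> \<le> ennreal (1 / (2 * pi * t\<^sup>2)) * ennreal (32 * pi * eps / sqrt t)"
    by (intro mult_left_mono nn_integral_prob_near_boundary_le[OF BM \<open>0 < t0\<close> True \<open>0 < eps\<close>]) simp
  also have "\<dots> = ennreal (16 * eps) * ennreal (t powr (-5/2))"
    using powr \<open>0 < t\<close> \<open>0 < eps\<close> by (simp add: ennreal_mult[symmetric] field_simps)
  finally show ?thesis using True by simp
next
  case False
  then show ?thesis
    by (simp add: scaled_bridge_loop_def loops_near_boundary_def)
qed

lemma brownian_loop_measure_near_boundary_le:
  fixes M :: "'a measure"
  assumes BM: "planar_BM M W" and "0 < t0" "0 < eps"
  shows "brownian_loop_measure M W (loops_near_boundary t0 eps) \<le> ennreal (32 / 3 * eps * t0 powr (-3/2))"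
proof -
  have [measurable]: "(\<lambda>(z, t). emeasure M {\<omega> \<in> space M. scaled_bridge_loop W z t \<omega> \<in> loops_near_boundary t0 eps})
      \<in> borel_measurable (lborel \<Otimes>\<^sub>M lborel)"
    using assms(3) by (intro borel_measurable_prob_near_boundary[OF BM \<open>0 < t0\<close>]) simp
  have "brownian_loop_measure M W (loops_near_boundary t0 eps)
      = (\<integral>\<^sup>+t. \<integral>\<^sup>+z. indicator {0<..} t * ennreal (1 / (2 * pi * t\<^sup>2))
            * emeasure M {\<omega> \<in> space M. scaled_bridge_loop W z t \<omega> \<in> loops_near_boundary t0 eps} \<partial>lborel \<partial>lborel)"
    unfolding brownian_loop_measure_def
    by (intro pair_sigma_finite.Fubini' pair_sigma_finite.intro lborel.sigma_finite_measure_axioms) measurable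
  also have "\<dots> \<le> (\<integral>\<^sup>+t. ennreal (16 * eps) * (ennreal (t powr (-5/2)) * indicator {t0..} t) \<partial>lborel)"
    by (intro nn_integral_mono loop_density_integral_le[OF assms])
  also have "\<dots> = ennreal (16 * eps) * ennreal (t0 powr (-3/2) * 2 / 3)"
    using nn_integral_powr_atLeast[OF \<open>0 < t0\<close>, of "-5/2"] by (simp add: nn_integral_cmult)
  also have "\<dots> = ennreal (32 / 3 * eps * t0 powr (-3/2))"
    using \<open>0 < eps\<close> by (simp add: ennreal_mult[symmetric] field_simps)
  finally show ?thesis .
qed

theorem proposition1:
  "\<exists>c::real. \<forall>(M :: 'a measure) W (t0::real) (eps::real).
     planar_BM M W \<and> t0 > 0 \<and> 0 < eps \<and> eps \<le> t0 powr (3/2) \<longrightarrow>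
     brownian_loop_measure M W (loops_near_boundary t0 eps) \<le> ennreal (c * eps * t0 powr (-3/2))"
  using brownian_loop_measure_near_boundary_le by blast

end
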